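(* Let $\nu\ge2$, $\rho>0$, and $\lambda_1,\dots,\lambda_\nu>0$, and let $X=(X_1,\dots,X_\nu)^T$ have the truncated normal density $$f(x)=k\prod_{n=1}^{\nu}\lambda_n^{-1/2}\phi(\lambda_n^{-1/2}x_n)\ \text{ if } x^Tx<\rho,\qquad f(x)=0 \text{ otherwise},$$ where $\phi$ is the standard univariate normal density and $k>0$ is the normalizing constant. Then for all $1\le n\ne m\le\nu$, $$\operatorname{cov}(X_n^2,X_m^2)\le 0.$$
   Context: This is the distribution of $X\sim N_\nu(0,\Lambda)$ with $\Lambda=\mathrm{diag}(\lambda_1,\dots,\lambda_\nu)$ truncated to the open Euclidean ball $\{x: x^Tx<\rho\}$. *)

theory Defs
  imports "HOL-Probability.Probability"
begin

definition trunc_normal_unnorm :: "('n::finite \<Rightarrow> real) \<Rightarrow> real \<Rightarrow> real ^ 'n \<Rightarrow> real" where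
  "trunc_normal_unnorm lam rho x =
     (if x \<bullet> x < rho
      then (\<Prod>i\<in>UNIV. lam i powr (-1/2) * std_normal_density (lam i powr (-1/2) * x $ i))
      else 0)"

definition trunc_normal_const :: "('n::finite \<Rightarrow> real) \<Rightarrow> real \<Rightarrow> real" where
  "trunc_normal_const lam rho = 1 / (\<integral>x. trunc_normal_unnorm lam rho x \<partial>lborel)"

definition trunc_normal_density :: "('n::finite \<Rightarrow> real) \<Rightarrow> real \<Rightarrow> real ^ 'n \<Rightarrow> real" where
  "trunc_normal_density lam rho x = trunc_normal_const lam rho * trunc_normal_unnorm lam rho x"

definition cov :: "'a measure \<Rightarrow> ('a \<Rightarrow> real) \<Rightarrow> ('a \<Rightarrow> real) \<Rightarrow> real" where
  "cov M Y Z = (\<integral>\<omega>. (Y \<omega> - (\<integral>\<omega>'. Y \<omega>' \<partial>M)) * (Z \<omega> - (\<integral>\<omega>'. Z \<omega>' \<partial>M)) \<partial>M)"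

end

theory Submission
  imports Defs
begin

text \<open>
  The pair \<open>(X\<^sub>n, X\<^sub>m)\<close> has a density proportional to
  \<open>g\<^sub>n(a) g\<^sub>m(b) H(\<rho> - a\<^sup>2 - b\<^sup>2)\<close>, where \<open>g\<^sub>i\<close> is the \<open>N(0, \<lambda>\<^sub>i)\<close> density and
  \<open>H(t)\<close> is the Gaussian mass of the ball \<open>{w. |w|\<^sup>2 < t}\<close> in the remaining coordinates.
  By the Prekopa-Leindler inequality, integrating out one coordinate at a time preserves
  log-concavity, so \<open>H\<close> is log-concave. Log-concavity gives
  \<open>H(s\<^sub>1) H(s\<^sub>2) \<le> H(s\<^sub>3) H(s\<^sub>4)\<close> whenever \<open>s\<^sub>3, s\<^sub>4\<close> lie between \<open>s\<^sub>1, s\<^sub>2\<close> and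
  \<open>s\<^sub>1 + s\<^sub>2 = s\<^sub>3 + s\<^sub>4\<close>; for the density \<open>p\<close> of the pair this says
  \<open>p(a,b) p(a',b') \<le> p(a,b') p(a',b)\<close> if \<open>a'\<^sup>2 \<le> a\<^sup>2\<close> and \<open>b'\<^sup>2 \<le> b\<^sup>2\<close>.
  Symmetrizing first in \<open>(b, b')\<close> and then in \<open>(a, a')\<close> turns this into
  \<open>E[X\<^sub>n\<^sup>2 X\<^sub>m\<^sup>2] \<le> E[X\<^sub>n\<^sup>2] E[X\<^sub>m\<^sup>2]\<close>.
\<close>

section \<open>Log-concave functions\<close>

text \<open>With \<open>powr\<close> the definition allows zeros: \<open>0 powr t = 0\<close>.\<close>
definition log_concave :: "(real \<Rightarrow> real) \<Rightarrow> bool" where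
  "log_concave f \<longleftrightarrow>
     (\<forall>x y t. 0 < t \<longrightarrow> t < 1 \<longrightarrow> f x powr t * f y powr (1 - t) \<le> f (t * x + (1 - t) * y))"

lemma log_concaveD:
  "log_concave f \<Longrightarrow> 0 < t \<Longrightarrow> t < 1 \<Longrightarrow> f x powr t * f y powr (1 - t) \<le> f (t * x + (1 - t) * y)"
  unfolding log_concave_def by blast

lemma powr_mult_strict_mono:
  fixes v w x y t :: real
  assumes "0 < v" "v < x" "0 < w" "w < y" "0 < t" "t < 1"
  shows "v powr t * w powr (1 - t) < x powr t * y powr (1 - t)"
proof -
  have "v powr t < x powr t" using assms by (intro powr_less_mono2) auto
  moreover have "w powr (1 - t) < y powr (1 - t)" using assms by (intro powr_less_mono2) auto
  ultimately show ?thesis using assms by (intro mult_strict_mono) auto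
qed

lemma powr_mult_powr_one_minus: "0 \<le> (a::real) \<Longrightarrow> a powr t * a powr (1 - t) = a"
  by (cases "a = 0") (auto simp: powr_add[symmetric])

lemma log_concave_superlevel_convex:
  assumes "log_concave f" "\<And>x. 0 \<le> f x" "0 < v" "a1 \<le> a" "a \<le> a2" "v < f a1" "v < f a2"
  shows "v < f a"
proof (cases "a = a1 \<or> a = a2")
  case True
  then show ?thesis using assms by auto
next
  case False
  then have lt: "a1 < a" "a < a2" using assms by auto
  define t where "t = (a2 - a) / (a2 - a1)"
  have t: "0 < t" "t < 1" using lt by (auto simp: t_def field_simps)
  have "t * (a2 - a1) = a2 - a" using lt by (simp add: t_def)
  then have a: "a = t * a1 + (1 - t) * a2" by (simp add: algebra_simps)
  have "v = v powr t * v powr (1 - t)" using assms by (simp add: powr_mult_powr_one_minus)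
  also have "\<dots> < f a1 powr t * f a2 powr (1 - t)"
    using assms t by (intro powr_mult_strict_mono) auto
  also have "\<dots> \<le> f a" unfolding a by (rule log_concaveD[OF assms(1) t])
  finally show ?thesis .
qed

lemma log_concave_mult_le:
  fixes H :: "real \<Rightarrow> real"
  assumes lc: "log_concave H" and nonneg: "\<And>x. 0 \<le> H x"
    and s: "s1 \<le> s3" "s3 \<le> s2" "s1 \<le> s4" "s4 \<le> s2" "s1 + s2 = s3 + s4"
  shows "H s1 * H s2 \<le> H s3 * H s4"
proof (cases "s3 = s1 \<or> s3 = s2")
  case True
  then have "(s3 = s1 \<and> s4 = s2) \<or> (s3 = s2 \<and> s4 = s1)" using s by auto
  then show ?thesis by (auto simp: mult.commute)
next
  case False
  then have lt: "s1 < s3" "s3 < s2" using s by auto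
  define t where "t = (s2 - s3) / (s2 - s1)"
  have t: "0 < t" "t < 1" "0 < 1 - t" "1 - t < 1" using lt by (auto simp: t_def field_simps)
  have "t * (s2 - s1) = s2 - s3" using lt by (simp add: t_def)
  then have s3: "s3 = t * s1 + (1 - t) * s2" and s4: "s4 = (1 - t) * s1 + (1 - (1 - t)) * s2"
    using s(5) by (simp_all add: algebra_simps)
  have "H s1 * H s2 = (H s1 powr t * H s1 powr (1 - t)) * (H s2 powr t * H s2 powr (1 - t))"
    by (simp add: powr_mult_powr_one_minus nonneg)
  also have "\<dots> = (H s1 powr t * H s2 powr (1 - t)) * (H s1 powr (1 - t) * H s2 powr (1 - (1 - t)))"
    by (simp add: ac_simps)
  also have "\<dots> \<le> H s3 * H s4"
    unfolding s3 s4 using log_concaveD[OF lc t(1,2)] log_concaveD[OF lc t(3,4)]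
    by (intro mult_mono) (auto simp: nonneg)
  finally show ?thesis .
qed

lemma log_concave_indicator_pos: "log_concave (\<lambda>t. if 0 < t then 1 else 0)"
  unfolding log_concave_def
proof (intro allI impI)
  fix x y t :: real
  assume t: "0 < t" "t < 1"
  show "(if 0 < x then 1 else 0) powr t * (if 0 < y then 1 else 0) powr (1 - t)
        \<le> (if 0 < t * x + (1 - t) * y then 1 else (0::real))"
  proof (cases "0 < x \<and> 0 < y")
    case True
    then have "0 < t * x + (1 - t) * y" using t by (intro add_pos_pos mult_pos_pos) auto
    then show ?thesis using True by simp
  qed auto
qed

section \<open>The Prekopa-Leindler inequality on the real line\<close>

lemma nn_integral_layer_cake:
  fixes h :: "real \<Rightarrow> real" and c :: real
  assumes hm[measurable]: "h \<in> borel_measurable borel" and hn: "\<And>x. 0 \<le> h x" and c: "0 < c"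
  shows "(\<integral>\<^sup>+x. ennreal (h x) \<partial>lborel) =
         ennreal c * (\<integral>\<^sup>+s. indicator {0<..} s * emeasure lborel {x. c * s < h x} \<partial>lborel)"
proof -
  let ?U = "{(x, s). 0 < s \<and> c * s < h x}"
  have "(\<integral>\<^sup>+x. ennreal (h x) \<partial>lborel) = (\<integral>\<^sup>+x. ennreal c * (\<integral>\<^sup>+s. indicator ?U (x, s) \<partial>lborel) \<partial>lborel)"
  proof (rule nn_integral_cong)
    fix x
    have "(\<integral>\<^sup>+s. indicator ?U (x, s) \<partial>lborel) = (\<integral>\<^sup>+s. indicator {0<..<h x / c} s \<partial>lborel)"
      using c by (intro nn_integral_cong) (auto simp: indicator_def field_simps)
    also have "\<dots> = ennreal (h x / c)"
      using hn[of x] c by simp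
    finally show "ennreal (h x) = ennreal c * (\<integral>\<^sup>+s. indicator ?U (x, s) \<partial>lborel)"
      using c hn[of x] by (simp add: ennreal_mult[symmetric])
  qed
  also have "\<dots> = ennreal c * (\<integral>\<^sup>+x. \<integral>\<^sup>+s. indicator ?U (x, s) \<partial>lborel \<partial>lborel)"
    by (rule nn_integral_cmult) measurable
  also have "(\<integral>\<^sup>+x. \<integral>\<^sup>+s. indicator ?U (x, s) \<partial>lborel \<partial>lborel)
      = (\<integral>\<^sup>+s. \<integral>\<^sup>+x. indicator ?U (x, s) \<partial>lborel \<partial>lborel)"
    by (rule pair_sigma_finite.Fubini') (auto intro: pair_sigma_finite.intro sigma_finite_lborel)
  also have "\<dots> = (\<integral>\<^sup>+s. indicator {0<..} s * emeasure lborel {x. c * s < h x} \<partial>lborel)"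
  proof (rule nn_integral_cong)
    fix s
    show "(\<integral>\<^sup>+x. indicator ?U (x, s) \<partial>lborel) = indicator {0<..} s * emeasure lborel {x. c * s < h x}"
    proof (cases "0 < s")
      case True
      then have "(\<integral>\<^sup>+x. indicator ?U (x, s) \<partial>lborel) = (\<integral>\<^sup>+x. indicator {x. c * s < h x} x \<partial>lborel)"
        by (intro nn_integral_cong) (auto simp: indicator_def)
      also have "\<dots> = emeasure lborel {x. c * s < h x}"
        by (rule nn_integral_indicator) measurable
      finally show ?thesis using True by simp
    qed (simp add: indicator_def)
  qed
  finally show ?thesis .
qed

lemma measurable_emeasure_superlevel[measurable]:
  fixes f :: "real \<Rightarrow> real"
  assumes [measurable]: "f \<in> borel_measurable borel"
  shows "(\<lambda>s. emeasure lborel {x. c * s < f x}) \<in> borel_measurable borel"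
proof -
  have fst: "(\<lambda>p :: real \<times> real. c * fst p) \<in> borel_measurable (borel \<Otimes>\<^sub>M lborel)"
    by (intro borel_measurable_times measurable_const measurable_fst'' measurable_ident_sets) auto
  have snd: "(\<lambda>p :: real \<times> real. f (snd p)) \<in> borel_measurable (borel \<Otimes>\<^sub>M lborel)"
    by (rule measurable_compose[OF measurable_snd]) simp
  have "{p :: real \<times> real. c * fst p < f (snd p)} \<in> sets (borel \<Otimes>\<^sub>M lborel)"
    using borel_measurable_less[OF fst snd] by (simp add: space_pair_measure)
  from sigma_finite_measure.measurable_emeasure_Pair[OF sigma_finite_lborel this]
  show ?thesis by (simp add: vimage_def)
qed

lemma nn_integral_superlevel_emeasure:
  fixes f :: "real \<Rightarrow> real"
  assumes fm[measurable]: "f \<in> borel_measurable borel" and fn: "\<And>x. 0 \<le> f x"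
    and Mf: "0 < Mf" "\<And>x. f x \<le> Mf"
    and fin: "(\<integral>\<^sup>+x. ennreal (f x) \<partial>lborel) = ennreal I" and I0: "0 \<le> I"
  shows "(\<integral>\<^sup>+s. indicator {0<..<1} s * emeasure lborel {x. Mf * s < f x} \<partial>lborel) = ennreal (I / Mf)"
proof -
  have "(\<integral>\<^sup>+s. indicator {0<..<1} s * emeasure lborel {x. Mf * s < f x} \<partial>lborel)
      = (\<integral>\<^sup>+s. indicator {0<..} s * emeasure lborel {x. Mf * s < f x} \<partial>lborel)"
  proof (rule nn_integral_cong)
    fix s
    show "indicator {0<..<1} s * emeasure lborel {x. Mf * s < f x}
        = indicator {0<..} s * emeasure lborel {x. Mf * s < f x}"
    proof (cases "1 \<le> s")
      case True
      have "Mf * 1 \<le> Mf * s" using Mf(1) True by (intro mult_left_mono) auto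
      then have "{x. Mf * s < f x} = {}" using Mf(2) by (auto simp: not_less intro: order.trans)
      then show ?thesis by simp
    qed (auto simp: indicator_def)
  qed
  moreover have "ennreal I = ennreal Mf * (\<integral>\<^sup>+s. indicator {0<..} s * emeasure lborel {x. Mf * s < f x} \<partial>lborel)"
    using nn_integral_layer_cake[OF fm fn Mf(1)] fin by simp
  ultimately show ?thesis using Mf(1) I0
    by (simp add: divide_ennreal[symmetric] ennreal_mult_divide_eq mult.commute[of "ennreal Mf"])
qed

lemma Sup_minus_Inf_le:
  fixes A :: "real set"
  assumes "A \<noteq> {}" "\<And>a1 a2. a1 \<in> A \<Longrightarrow> a2 \<in> A \<Longrightarrow> a2 - a1 \<le> D"
  shows "bdd_above A" "bdd_below A" "Sup A - Inf A \<le> D"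
proof -
  obtain a0 where a0: "a0 \<in> A" using assms by auto
  show "bdd_above A" by (rule bdd_aboveI[of _ "a0 + D"]) (use assms(2) a0 in force)
  show "bdd_below A" by (rule bdd_belowI[of _ "a0 - D"]) (use assms(2) a0 in force)
  have "Sup A \<le> a1 + D" if "a1 \<in> A" for a1
    using assms(1) assms(2)[OF that] by (intro cSup_least) (auto simp: algebra_simps)
  then have "Sup A - D \<le> Inf A" using assms(1) by (intro cInf_greatest) (auto simp: algebra_simps)
  then show "Sup A - Inf A \<le> D" by simp
qed

lemma weighted_diameters_le:
  fixes A B :: "real set"
  assumes A: "A \<noteq> {}" and B: "B \<noteq> {}" and th: "0 < \<theta>" "\<theta> < 1"
    and H: "\<And>a1 a2 b1 b2. a1 \<in> A \<Longrightarrow> a2 \<in> A \<Longrightarrow> b1 \<in> B \<Longrightarrow> b2 \<in> B \<Longrightarrow> a1 \<le> a2 \<Longrightarrow> b1 \<le> b2 \<Longrightarrow>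
          \<theta> * (a2 - a1) + (1 - \<theta>) * (b2 - b1) \<le> e"
  shows "bdd_above A" "bdd_below A" "bdd_above B" "bdd_below B"
    and "\<theta> * (Sup A - Inf A) + (1 - \<theta>) * (Sup B - Inf B) \<le> e"
proof -
  have all: "\<theta> * (a2 - a1) + (1 - \<theta>) * (b2 - b1) \<le> e"
    if "a1 \<in> A" "a2 \<in> A" "b1 \<in> B" "b2 \<in> B" for a1 a2 b1 b2
  proof -
    have "\<theta> * (a2 - a1) + (1 - \<theta>) * (b2 - b1) \<le> \<theta> * (max a1 a2 - a1) + (1 - \<theta>) * (max b1 b2 - b1)"
      using th by (intro add_mono mult_left_mono) auto
    also have "\<dots> \<le> e"
      using H[of a1 "max a1 a2" b1 "max b1 b2"] that by (auto simp: max_def)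
    finally show ?thesis .
  qed
  obtain b0 where b0: "b0 \<in> B" using B by auto
  have dA: "bdd_above A" "bdd_below A" "Sup A - Inf A \<le> (e - (1 - \<theta>) * (b2 - b1)) / \<theta>"
    if "b1 \<in> B" "b2 \<in> B" for b1 b2
  proof -
    have "a2 - a1 \<le> (e - (1 - \<theta>) * (b2 - b1)) / \<theta>" if "a1 \<in> A" "a2 \<in> A" for a1 a2
      using all[OF that \<open>b1 \<in> B\<close> \<open>b2 \<in> B\<close>] th by (simp add: field_simps)
    from Sup_minus_Inf_le[OF A this] show "bdd_above A" "bdd_below A"
      "Sup A - Inf A \<le> (e - (1 - \<theta>) * (b2 - b1)) / \<theta>" by auto
  qed
  show "bdd_above A" "bdd_below A" using dA[OF b0 b0] by auto
  have "b2 - b1 \<le> (e - \<theta> * (Sup A - Inf A)) / (1 - \<theta>)" if "b1 \<in> B" "b2 \<in> B" for b1 b2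
    using dA(3)[OF that] th by (simp add: field_simps)
  from Sup_minus_Inf_le[OF B this]
  show "bdd_above B" "bdd_below B" "\<theta> * (Sup A - Inf A) + (1 - \<theta>) * (Sup B - Inf B) \<le> e"
    using th by (auto simp: field_simps)
qed

lemma emeasure_lborel_le_Sup_minus_Inf:
  fixes A :: "real set"
  assumes "A \<noteq> {}" "bdd_above A" "bdd_below A" "A \<in> sets lborel"
  shows "emeasure lborel A \<le> ennreal (Sup A - Inf A)"
proof -
  have "A \<subseteq> {Inf A .. Sup A}" using assms by (auto intro: cInf_lower cSup_upper)
  then have "emeasure lborel A \<le> emeasure lborel {Inf A .. Sup A}" by (intro emeasure_mono) auto
  also have "\<dots> = ennreal (Sup A - Inf A)" using assms by (simp add: cInf_le_cSup)
  finally show ?thesis .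
qed

lemma brunn_minkowski_intervals:
  fixes A B E :: "real set"
  assumes A: "A \<noteq> {}" "A \<in> sets lborel" and B: "B \<noteq> {}" "B \<in> sets lborel"
    and E: "E \<in> sets lborel" and th: "0 < \<theta>" "\<theta> < 1"
    and sub: "\<And>a1 a2 b1 b2. a1 \<in> A \<Longrightarrow> a2 \<in> A \<Longrightarrow> b1 \<in> B \<Longrightarrow> b2 \<in> B \<Longrightarrow> a1 \<le> a2 \<Longrightarrow> b1 \<le> b2 \<Longrightarrow>
          {\<theta> * a1 + (1 - \<theta>) * b1 .. \<theta> * a2 + (1 - \<theta>) * b2} \<subseteq> E"
  shows "ennreal \<theta> * emeasure lborel A + ennreal (1 - \<theta>) * emeasure lborel B \<le> emeasure lborel E"
proof (cases "emeasure lborel E = \<infinity>")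
  case False
  define e where "e = enn2real (emeasure lborel E)"
  have Ee: "emeasure lborel E = ennreal e" using False by (simp add: e_def ennreal_enn2real_if)
  have "\<theta> * (a2 - a1) + (1 - \<theta>) * (b2 - b1) \<le> e"
    if "a1 \<in> A" "a2 \<in> A" "b1 \<in> B" "b2 \<in> B" "a1 \<le> a2" "b1 \<le> b2" for a1 a2 b1 b2
  proof -
    have le: "\<theta> * a1 + (1 - \<theta>) * b1 \<le> \<theta> * a2 + (1 - \<theta>) * b2"
      using that th by (intro add_mono mult_left_mono) auto
    have "ennreal (\<theta> * (a2 - a1) + (1 - \<theta>) * (b2 - b1))
        = emeasure lborel {\<theta> * a1 + (1 - \<theta>) * b1 .. \<theta> * a2 + (1 - \<theta>) * b2}"
      using le by (simp add: algebra_simps)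
    also have "\<dots> \<le> ennreal e" unfolding Ee[symmetric] by (intro emeasure_mono sub that E)
    finally show ?thesis by (simp add: e_def ennreal_le_iff)
  qed
  note diam = weighted_diameters_le[OF A(1) B(1) th this]
  have "ennreal \<theta> * emeasure lborel A + ennreal (1 - \<theta>) * emeasure lborel B
      \<le> ennreal \<theta> * ennreal (Sup A - Inf A) + ennreal (1 - \<theta>) * ennreal (Sup B - Inf B)"
    using emeasure_lborel_le_Sup_minus_Inf[OF A(1) diam(1,2) A(2)]
      emeasure_lborel_le_Sup_minus_Inf[OF B(1) diam(3,4) B(2)]
    by (intro add_mono mult_left_mono) auto
  also have "\<dots> = ennreal (\<theta> * (Sup A - Inf A) + (1 - \<theta>) * (Sup B - Inf B))"
    using th A(1) B(1) diam(1-4) by (simp add: ennreal_mult ennreal_plus cInf_le_cSup)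
  also have "\<dots> \<le> ennreal e" using diam(5) by (rule ennreal_leI)
  finally show ?thesis using Ee by simp
qed simp

lemma interval_subset_superlevel:
  fixes f g h :: "real \<Rightarrow> real"
  assumes lcf: "log_concave f" and lcg: "log_concave g" and fn: "\<And>x. 0 \<le> f x" and gn: "\<And>x. 0 \<le> g x"
    and th: "0 < \<theta>" "\<theta> < 1"
    and key: "\<And>x y. f x powr \<theta> * g y powr (1 - \<theta>) \<le> h (\<theta> * x + (1 - \<theta>) * y)"
    and vf: "0 < vf" and vg: "0 < vg"
    and a: "a1 \<le> a2" "vf < f a1" "vf < f a2"
    and b: "b1 \<le> b2" "vg < g b1" "vg < g b2"
  shows "{\<theta> * a1 + (1 - \<theta>) * b1 .. \<theta> * a2 + (1 - \<theta>) * b2} \<subseteq> {z. vf powr \<theta> * vg powr (1 - \<theta>) < h z}"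
proof
  fix z assume z: "z \<in> {\<theta> * a1 + (1 - \<theta>) * b1 .. \<theta> * a2 + (1 - \<theta>) * b2}"
  obtain \<tau> where tau: "0 \<le> \<tau>" "\<tau> \<le> 1"
    "z = (\<theta> * a1 + (1 - \<theta>) * b1) + \<tau> * ((\<theta> * a2 + (1 - \<theta>) * b2) - (\<theta> * a1 + (1 - \<theta>) * b1))"
  proof (cases "\<theta> * a2 + (1 - \<theta>) * b2 = \<theta> * a1 + (1 - \<theta>) * b1")
    case True
    then show ?thesis using that[of 0] z by auto
  next
    case False
    then show ?thesis
      using that[of "(z - (\<theta> * a1 + (1 - \<theta>) * b1)) / ((\<theta> * a2 + (1 - \<theta>) * b2) - (\<theta> * a1 + (1 - \<theta>) * b1))"] z
      by (auto simp: field_simps)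
  qed
  define a where "a = a1 + \<tau> * (a2 - a1)"
  define b where "b = b1 + \<tau> * (b2 - b1)"
  have "\<tau> * (a2 - a1) \<le> 1 * (a2 - a1)" "\<tau> * (b2 - b1) \<le> 1 * (b2 - b1)"
    using tau a(1) b(1) by (intro mult_right_mono; simp)+
  then have "a1 \<le> a" "a \<le> a2" "b1 \<le> b" "b \<le> b2"
    using tau a(1) b(1) by (auto simp: a_def b_def)
  then have fa: "vf < f a" and gb: "vg < g b"
    using log_concave_superlevel_convex[OF lcf fn vf _ _ a(2,3)]
      log_concave_superlevel_convex[OF lcg gn vg _ _ b(2,3)] by auto
  have "vf powr \<theta> * vg powr (1 - \<theta>) < f a powr \<theta> * g b powr (1 - \<theta>)"
    using vf vg fa gb th by (intro powr_mult_strict_mono) auto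
  also have "\<dots> \<le> h (\<theta> * a + (1 - \<theta>) * b)" by (rule key)
  also have "\<theta> * a + (1 - \<theta>) * b = z" using tau(3) by (simp add: a_def b_def algebra_simps)
  finally show "z \<in> {z. vf powr \<theta> * vg powr (1 - \<theta>) < h z}" by simp
qed

lemma superlevel_brunn_minkowski:
  fixes f g h :: "real \<Rightarrow> real"
  assumes [measurable]: "f \<in> borel_measurable borel" "g \<in> borel_measurable borel" "h \<in> borel_measurable borel"
    and fn: "\<And>x. 0 \<le> f x" and gn: "\<And>x. 0 \<le> g x"
    and lcf: "log_concave f" and lcg: "log_concave g" and th: "0 < \<theta>" "\<theta> < 1"
    and key: "\<And>x y. f x powr \<theta> * g y powr (1 - \<theta>) \<le> h (\<theta> * x + (1 - \<theta>) * y)"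
    and vf: "0 < vf" "\<exists>x. vf < f x" and vg: "0 < vg" "\<exists>x. vg < g x"
  shows "ennreal \<theta> * emeasure lborel {x. vf < f x} + ennreal (1 - \<theta>) * emeasure lborel {x. vg < g x}
      \<le> emeasure lborel {x. vf powr \<theta> * vg powr (1 - \<theta>) < h x}"
proof (rule brunn_minkowski_intervals)
  show "{x. vf < f x} \<noteq> {}" "{x. vg < g x} \<noteq> {}" using vf(2) vg(2) by auto
  show "{x. vf < f x} \<in> sets lborel" "{x. vg < g x} \<in> sets lborel"
    "{x. vf powr \<theta> * vg powr (1 - \<theta>) < h x} \<in> sets lborel" by measurable
qed (use interval_subset_superlevel[OF lcf lcg fn gn th key vf(1) vg(1)] th in auto)

lemma powr_mult_le_scaled_mean:
  fixes I J M N \<theta> :: real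
  assumes "0 \<le> I" "0 \<le> J" "0 < M" "0 < N" "0 < \<theta>" "\<theta> < 1"
  shows "I powr \<theta> * J powr (1 - \<theta>) \<le> M powr \<theta> * N powr (1 - \<theta>) * (\<theta> * (I / M) + (1 - \<theta>) * (J / N))"
proof (cases "I = 0 \<or> J = 0")
  case True
  then show ?thesis using assms by (auto intro!: mult_nonneg_nonneg add_nonneg_nonneg)
next
  case False
  have "I powr \<theta> * J powr (1 - \<theta>) = M powr \<theta> * N powr (1 - \<theta>) * ((I / M) powr \<theta> * (J / N) powr (1 - \<theta>))"
    using assms by (simp add: powr_divide field_simps)
  also have "\<dots> \<le> M powr \<theta> * N powr (1 - \<theta>) * (\<theta> * (I / M) + (1 - \<theta>) * (J / N))"
    using Youngs_inequality_0[of \<theta> "1 - \<theta>" "I / M" "J / N"] assms False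
    by (intro mult_left_mono) auto
  finally show ?thesis .
qed

text \<open>
  The functions are normalized by their suprema \<open>Mf, Mg\<close>; by the layer-cake formula
  \<open>\<integral>h \<ge> c \<integral>\<^sub>0\<^sup>1 |{h > c s}| ds\<close> with \<open>c = Mf powr \<theta> * Mg powr (1 - \<theta>)\<close>, and each level set
  is controlled by the one-dimensional Brunn-Minkowski inequality.
\<close>
lemma prekopa_leindler:
  fixes f g h :: "real \<Rightarrow> real"
  assumes fm[measurable]: "f \<in> borel_measurable borel" and gm[measurable]: "g \<in> borel_measurable borel"
    and hm[measurable]: "h \<in> borel_measurable borel"
    and fn: "\<And>x. 0 \<le> f x" and gn: "\<And>x. 0 \<le> g x" and hn: "\<And>x. 0 \<le> h x"
    and bf: "bdd_above (range f)" and bg: "bdd_above (range g)"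
    and lcf: "log_concave f" and lcg: "log_concave g" and th: "0 < \<theta>" "\<theta> < 1"
    and key: "\<And>x y. f x powr \<theta> * g y powr (1 - \<theta>) \<le> h (\<theta> * x + (1 - \<theta>) * y)"
    and F: "(\<integral>\<^sup>+x. ennreal (f x) \<partial>lborel) = ennreal F" "0 \<le> F"
    and G: "(\<integral>\<^sup>+x. ennreal (g x) \<partial>lborel) = ennreal G" "0 \<le> G"
  shows "ennreal (F powr \<theta> * G powr (1 - \<theta>)) \<le> (\<integral>\<^sup>+x. ennreal (h x) \<partial>lborel)"
proof -
  define Mf where "Mf = Sup (range f)"
  define Mg where "Mg = Sup (range g)"
  have f_le: "f x \<le> Mf" and g_le: "g x \<le> Mg" for x
    unfolding Mf_def Mg_def using bf bg by (auto intro: cSup_upper)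
  show ?thesis
  proof (cases "Mf = 0 \<or> Mg = 0")
    case True
    then have "(\<forall>x. f x = 0) \<or> (\<forall>x. g x = 0)" using f_le g_le fn gn by (metis order.antisym)
    then have "F = 0 \<or> G = 0" using F G by (auto simp: ennreal_eq_0_iff)
    then show ?thesis by auto
  next
    case False
    have Mf: "0 < Mf" and Mg: "0 < Mg" using False fn[of 0] gn[of 0] f_le[of 0] g_le[of 0] by linarith+
    define c where "c = Mf powr \<theta> * Mg powr (1 - \<theta>)"
    have c: "0 < c" using Mf Mg by (simp add: c_def)
    have level: "ennreal \<theta> * emeasure lborel {x. Mf * s < f x} + ennreal (1 - \<theta>) * emeasure lborel {x. Mg * s < g x}
        \<le> emeasure lborel {x. c * s < h x}" if s: "0 < s" "s < 1" for s
    proof -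
      have "Mf * s < Mf" "Mg * s < Mg" using Mf Mg s by simp_all
      then have "\<exists>x. Mf * s < f x" "\<exists>x. Mg * s < g x"
        using bf bg unfolding Mf_def Mg_def by (simp_all add: less_cSup_iff)
      moreover have "(Mf * s) powr \<theta> * (Mg * s) powr (1 - \<theta>) = c * s"
        using Mf Mg s by (simp add: c_def powr_mult powr_add[symmetric])
      ultimately show ?thesis
        using superlevel_brunn_minkowski[OF fm gm hm fn gn lcf lcg th key, of "Mf * s" "Mg * s"] Mf Mg s
        by simp
    qed
    have "ennreal (c * (\<theta> * (F / Mf) + (1 - \<theta>) * (G / Mg)))
        = ennreal c * (ennreal \<theta> * ennreal (F / Mf) + ennreal (1 - \<theta>) * ennreal (G / Mg))"
      using c th F(2) G(2) Mf Mg by (simp add: ennreal_mult ennreal_plus del: times_divide_eq_right)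
    also have "\<dots> = ennreal c * (\<integral>\<^sup>+s. ennreal \<theta> * (indicator {0<..<1} s * emeasure lborel {x. Mf * s < f x})
           + ennreal (1 - \<theta>) * (indicator {0<..<1} s * emeasure lborel {x. Mg * s < g x}) \<partial>lborel)"
      using nn_integral_superlevel_emeasure[OF fm fn Mf f_le F] nn_integral_superlevel_emeasure[OF gm gn Mg g_le G]
      by (subst nn_integral_add) (auto simp: nn_integral_cmult)
    also have "\<dots> \<le> ennreal c * (\<integral>\<^sup>+s. indicator {0<..} s * emeasure lborel {x. c * s < h x} \<partial>lborel)"
      using level by (intro mult_left_mono nn_integral_mono) (auto simp: indicator_def)
    also have "\<dots> = (\<integral>\<^sup>+x. ennreal (h x) \<partial>lborel)"
      by (rule nn_integral_layer_cake[OF hm hn c, symmetric])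
    finally show ?thesis
      using powr_mult_le_scaled_mean[OF F(2) G(2) Mf Mg th] unfolding c_def
      by (meson ennreal_leI order.trans)
  qed
qed

lemma log_concave_marginal:
  fixes F :: "real \<Rightarrow> real \<Rightarrow> real"
  assumes meas[measurable]: "\<And>t. F t \<in> borel_measurable borel"
    and nonneg: "\<And>t y. 0 \<le> F t y"
    and bdd: "\<And>t. bdd_above (range (F t))"
    and fin: "\<And>t. (\<integral>\<^sup>+y. ennreal (F t y) \<partial>lborel) < \<infinity>"
    and jlc: "\<And>t1 t2 y1 y2 \<theta>. 0 < \<theta> \<Longrightarrow> \<theta> < 1 \<Longrightarrow>
      F t1 y1 powr \<theta> * F t2 y2 powr (1 - \<theta>) \<le> F (\<theta> * t1 + (1 - \<theta>) * t2) (\<theta> * y1 + (1 - \<theta>) * y2)"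
  shows "log_concave (\<lambda>t. enn2real (\<integral>\<^sup>+y. ennreal (F t y) \<partial>lborel))"
  unfolding log_concave_def
proof (intro allI impI)
  fix x y \<theta> :: real
  assume th: "0 < \<theta>" "\<theta> < 1"
  let ?I = "\<lambda>t. enn2real (\<integral>\<^sup>+y. ennreal (F t y) \<partial>lborel)"
  have I: "(\<integral>\<^sup>+y. ennreal (F t y) \<partial>lborel) = ennreal (?I t)" for t
    using fin[of t] by (simp add: ennreal_enn2real_if)
  have "log_concave (F t)" for t
    unfolding log_concave_def
  proof (intro allI impI)
    fix a b s :: real
    assume "0 < s" "s < 1"
    from jlc[OF this, of t a t b] show "F t a powr s * F t b powr (1 - s) \<le> F t (s * a + (1 - s) * b)"
      by (simp add: algebra_simps)
  qed
  with prekopa_leindler[OF meas meas meas nonneg nonneg nonneg bdd bdd _ _ th jlc[OF th] I _ I]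
  have "ennreal (?I x powr \<theta> * ?I y powr (1 - \<theta>)) \<le> ennreal (?I (\<theta> * x + (1 - \<theta>) * y))"
    by (simp add: I[symmetric])
  then show "?I x powr \<theta> * ?I y powr (1 - \<theta>) \<le> ?I (\<theta> * x + (1 - \<theta>) * y)"
    by (simp add: ennreal_le_iff)
qed

section \<open>Gaussian mass of balls\<close>

definition gauss_density :: "real \<Rightarrow> real \<Rightarrow> real" where
  "gauss_density l w = l powr (-1/2) * std_normal_density (l powr (-1/2) * w)"

lemma gauss_density_nonneg: "0 < l \<Longrightarrow> 0 \<le> gauss_density l w"
  by (simp add: gauss_density_def)

lemma gauss_density_measurable[measurable]: "gauss_density l \<in> borel_measurable borel"
  unfolding gauss_density_def[abs_def] by measurable

lemma gauss_density_le: "0 < l \<Longrightarrow> gauss_density l w \<le> l powr (-1/2)"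
proof -
  assume l: "0 < l"
  have "std_normal_density v \<le> 1" for v
  proof -
    have "1 \<le> sqrt (2 * pi)" using pi_gt3 by (simp add: real_le_rsqrt)
    moreover have "exp (- v\<^sup>2 / 2) \<le> 1" by simp
    ultimately show ?thesis unfolding normal_density_def by (intro mult_le_one) auto
  qed
  then show ?thesis using l unfolding gauss_density_def by (intro mult_left_le) auto
qed

lemma gauss_density_eq_normal_density: "0 < l \<Longrightarrow> gauss_density l w = normal_density 0 (sqrt l) w"
proof -
  assume l: "0 < l"
  have a: "l powr (-1/2) = 1 / sqrt l" using l by (simp add: powr_minus_divide powr_half_sqrt)
  show ?thesis using l unfolding gauss_density_def normal_density_def a
    by (simp add: power_divide real_sqrt_mult field_simps)
qed

lemma nn_integral_gauss_density: "0 < l \<Longrightarrow> (\<integral>\<^sup>+w. ennreal (gauss_density l w) \<partial>lborel) = 1"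
proof -
  assume l: "0 < l"
  interpret prob_space "density lborel (\<lambda>x. ennreal (normal_density 0 (sqrt l) x))"
    using l by (intro prob_space_normal_density) auto
  show ?thesis
    using emeasure_space_1 l by (simp add: emeasure_density gauss_density_eq_normal_density)
qed

lemma square_convex_combination:
  fixes x y \<theta> :: real
  assumes "0 \<le> \<theta>" "\<theta> \<le> 1"
  shows "(\<theta> * x + (1 - \<theta>) * y)\<^sup>2 \<le> \<theta> * x\<^sup>2 + (1 - \<theta>) * y\<^sup>2"
proof -
  have "\<theta> * x\<^sup>2 + (1 - \<theta>) * y\<^sup>2 - (\<theta> * x + (1 - \<theta>) * y)\<^sup>2 = \<theta> * (1 - \<theta>) * (x - y)\<^sup>2"
    by (simp add: power2_eq_square algebra_simps)
  also have "\<dots> \<ge> 0" using assms by simp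
  finally show ?thesis by simp
qed

lemma log_concave_gauss_density:
  assumes l: "0 < l"
  shows "log_concave (gauss_density l)"
  unfolding log_concave_def
proof (intro allI impI)
  fix x y \<theta> :: real
  assume th: "0 < \<theta>" "\<theta> < 1"
  define C where "C = 1 / sqrt (2 * pi * (sqrt l)\<^sup>2)"
  define s where "s = 2 * (sqrt l)\<^sup>2"
  have C: "0 < C" and s: "0 < s" using l by (simp_all add: C_def s_def)
  have g: "gauss_density l w = C * exp (- w\<^sup>2 / s)" for w
    using l by (simp add: gauss_density_eq_normal_density normal_density_def C_def s_def)
  have convex: "(\<theta> * x + (1 - \<theta>) * y)\<^sup>2 \<le> \<theta> * x\<^sup>2 + (1 - \<theta>) * y\<^sup>2"
    using th by (intro square_convex_combination) auto
  have "gauss_density l x powr \<theta> * gauss_density l y powr (1 - \<theta>)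
      = (C powr \<theta> * C powr (1 - \<theta>)) * (exp (- x\<^sup>2 / s * \<theta>) * exp (- y\<^sup>2 / s * (1 - \<theta>)))"
    using C by (simp add: g powr_mult exp_powr_real)
  also have "\<dots> = C * exp (- (\<theta> * x\<^sup>2 + (1 - \<theta>) * y\<^sup>2) / s)"
    using C s by (simp add: powr_mult_powr_one_minus exp_add[symmetric] field_simps)
  also have "\<dots> \<le> C * exp (- (\<theta> * x + (1 - \<theta>) * y)\<^sup>2 / s)"
  proof -
    have "- (\<theta> * x\<^sup>2 + (1 - \<theta>) * y\<^sup>2) / s \<le> - (\<theta> * x + (1 - \<theta>) * y)\<^sup>2 / s"
      using s convex by (intro divide_right_mono) auto
    then show ?thesis using C by (intro mult_left_mono) auto
  qed
  also have "\<dots> = gauss_density l (\<theta> * x + (1 - \<theta>) * y)" by (simp add: g)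
  finally show "gauss_density l x powr \<theta> * gauss_density l y powr (1 - \<theta>)
      \<le> gauss_density l (\<theta> * x + (1 - \<theta>) * y)" .
qed

text \<open>The step that adds one coordinate: \<open>y\<^sup>2\<close> is convex and \<open>H\<close> is monotone.\<close>
lemma log_concave_mult_shift_square:
  fixes g H :: "real \<Rightarrow> real"
  assumes lcg: "log_concave g" and lcH: "log_concave H" and mono: "mono H"
    and gn: "\<And>x. 0 \<le> g x" and Hn: "\<And>x. 0 \<le> H x" and th: "0 < \<theta>" "\<theta> < 1"
  shows "(g y1 * H (t1 - y1\<^sup>2)) powr \<theta> * (g y2 * H (t2 - y2\<^sup>2)) powr (1 - \<theta>)
      \<le> g (\<theta> * y1 + (1 - \<theta>) * y2) * H ((\<theta> * t1 + (1 - \<theta>) * t2) - (\<theta> * y1 + (1 - \<theta>) * y2)\<^sup>2)"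
proof -
  have "\<theta> * (t1 - y1\<^sup>2) + (1 - \<theta>) * (t2 - y2\<^sup>2) \<le> (\<theta> * t1 + (1 - \<theta>) * t2) - (\<theta> * y1 + (1 - \<theta>) * y2)\<^sup>2"
    using square_convex_combination[of \<theta> y1 y2] th by (simp add: algebra_simps)
  then have H: "H (t1 - y1\<^sup>2) powr \<theta> * H (t2 - y2\<^sup>2) powr (1 - \<theta>)
      \<le> H ((\<theta> * t1 + (1 - \<theta>) * t2) - (\<theta> * y1 + (1 - \<theta>) * y2)\<^sup>2)"
    using log_concaveD[OF lcH th] mono by (meson monoD order.trans)
  have "(g y1 * H (t1 - y1\<^sup>2)) powr \<theta> * (g y2 * H (t2 - y2\<^sup>2)) powr (1 - \<theta>)
      = (g y1 powr \<theta> * g y2 powr (1 - \<theta>)) * (H (t1 - y1\<^sup>2) powr \<theta> * H (t2 - y2\<^sup>2) powr (1 - \<theta>))"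
    by (simp add: powr_mult gn Hn)
  also have "\<dots> \<le> g (\<theta> * y1 + (1 - \<theta>) * y2) * H ((\<theta> * t1 + (1 - \<theta>) * t2) - (\<theta> * y1 + (1 - \<theta>) * y2)\<^sup>2)"
    using log_concaveD[OF lcg th] H by (intro mult_mono) (auto simp: gn Hn)
  finally show ?thesis .
qed

definition gauss_ball_nn :: "('i \<Rightarrow> real) \<Rightarrow> 'i set \<Rightarrow> real \<Rightarrow> ennreal" where
  "gauss_ball_nn lam J t =
     (\<integral>\<^sup>+w. ennreal (if (\<Sum>j\<in>J. (w j)\<^sup>2) < t then (\<Prod>j\<in>J. gauss_density (lam j) (w j)) else 0)
       \<partial>Pi\<^sub>M J (\<lambda>_. lborel))"

definition gauss_ball :: "('i \<Rightarrow> real) \<Rightarrow> 'i set \<Rightarrow> real \<Rightarrow> real" where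
  "gauss_ball lam J t = enn2real (gauss_ball_nn lam J t)"

interpretation lborel_product: product_sigma_finite "\<lambda>_::'i. lborel :: real measure"
  by standard

lemma gauss_ball_nn_empty: "gauss_ball_nn lam {} t = (if 0 < t then 1 else 0)"
  unfolding gauss_ball_nn_def by (subst lborel_product.nn_integral_empty) auto

lemma gauss_ball_nn_insert:
  fixes lam :: "'i \<Rightarrow> real"
  assumes J: "finite J" "i \<notin> J" and l: "0 < lam i"
  shows "gauss_ball_nn lam (insert i J) t
    = (\<integral>\<^sup>+y. ennreal (gauss_density (lam i) y) * gauss_ball_nn lam J (t - y\<^sup>2) \<partial>lborel)"
proof -
  let ?f = "\<lambda>J t w. ennreal (if (\<Sum>j\<in>J. (w j)\<^sup>2) < t then (\<Prod>j\<in>J. gauss_density (lam j) (w j)) else 0)"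
  have split: "?f (insert i J) t (w(i := y)) = ennreal (gauss_density (lam i) y) * ?f J (t - y\<^sup>2) w"
    for y and w :: "'i \<Rightarrow> real"
  proof -
    have "(\<Sum>j\<in>J. ((w(i := y)) j)\<^sup>2) = (\<Sum>j\<in>J. (w j)\<^sup>2)"
      "(\<Prod>j\<in>J. gauss_density (lam j) ((w(i := y)) j)) = (\<Prod>j\<in>J. gauss_density (lam j) (w j))"
      using J by (auto intro!: sum.cong prod.cong)
    then show ?thesis
      using J gauss_density_nonneg[OF l, of y] by (auto simp: ennreal_mult' algebra_simps)
  qed
  have "gauss_ball_nn lam (insert i J) t = (\<integral>\<^sup>+y. \<integral>\<^sup>+w. ?f (insert i J) t (w(i := y)) \<partial>Pi\<^sub>M J (\<lambda>_. lborel) \<partial>lborel)"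
    unfolding gauss_ball_nn_def using J by (intro lborel_product.product_nn_integral_insert_rev) auto
  also have "\<dots> = (\<integral>\<^sup>+y. ennreal (gauss_density (lam i) y) * gauss_ball_nn lam J (t - y\<^sup>2) \<partial>lborel)"
    unfolding split gauss_ball_nn_def using J by (intro nn_integral_cong nn_integral_cmult) auto
  finally show ?thesis .
qed

context
  fixes lam :: "'i \<Rightarrow> real"
  assumes lam: "\<And>j. 0 < lam j"
begin

lemma gauss_ball_nn_mono: "t \<le> t' \<Longrightarrow> gauss_ball_nn lam J t \<le> gauss_ball_nn lam J t'"
  unfolding gauss_ball_nn_def
  by (intro nn_integral_mono ennreal_leI) (auto intro!: prod_nonneg gauss_density_nonneg lam)

lemma gauss_ball_nn_le_1: "finite J \<Longrightarrow> gauss_ball_nn lam J t \<le> 1"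
proof (induction J arbitrary: t rule: finite_induct)
  case empty
  then show ?case by (simp add: gauss_ball_nn_empty)
next
  case (insert i J)
  have "gauss_ball_nn lam (insert i J) t
      = (\<integral>\<^sup>+y. ennreal (gauss_density (lam i) y) * gauss_ball_nn lam J (t - y\<^sup>2) \<partial>lborel)"
    using insert lam by (intro gauss_ball_nn_insert) auto
  also have "\<dots> \<le> (\<integral>\<^sup>+y. ennreal (gauss_density (lam i) y) \<partial>lborel)"
    using insert.IH by (intro nn_integral_mono) (simp add: mult_left_le)
  also have "\<dots> = 1" using lam by (rule nn_integral_gauss_density)
  finally show ?case .
qed

lemma gauss_ball_nn_eq: "finite J \<Longrightarrow> gauss_ball_nn lam J t = ennreal (gauss_ball lam J t)"
proof -
  assume "finite J"
  then have "gauss_ball_nn lam J t < \<top>" using gauss_ball_nn_le_1[of J t] by (simp add: le_less_trans)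
  then show ?thesis unfolding gauss_ball_def by (simp add: ennreal_enn2real_if)
qed

lemma gauss_ball_nonneg: "0 \<le> gauss_ball lam J t"
  by (simp add: gauss_ball_def)

lemma gauss_ball_le_1: "finite J \<Longrightarrow> gauss_ball lam J t \<le> 1"
  using gauss_ball_nn_le_1[of J t] gauss_ball_nn_eq[of J t] by (simp add: ennreal_le_1)

lemma mono_gauss_ball: "finite J \<Longrightarrow> mono (gauss_ball lam J)"
proof (rule monoI)
  fix t t' :: real
  assume "finite J" "t \<le> t'"
  then show "gauss_ball lam J t \<le> gauss_ball lam J t'"
    using gauss_ball_nn_mono[of t t' J] gauss_ball_nonneg[of J t']
    by (simp add: gauss_ball_nn_eq ennreal_le_iff)
qed

lemma gauss_ball_nonpos: "t \<le> 0 \<Longrightarrow> gauss_ball lam J t = 0"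
proof -
  assume "t \<le> 0"
  then have "\<not> (\<Sum>j\<in>J. (w j)\<^sup>2) < t" for w :: "'i \<Rightarrow> real"
    using sum_nonneg[of J "\<lambda>j. (w j)\<^sup>2"] by auto
  then show ?thesis unfolding gauss_ball_def gauss_ball_nn_def by simp
qed

lemma gauss_ball_measurable[measurable]: "finite J \<Longrightarrow> gauss_ball lam J \<in> borel_measurable borel"
  by (rule borel_measurable_mono) (rule mono_gauss_ball)

lemma log_concave_gauss_ball: "finite J \<Longrightarrow> log_concave (gauss_ball lam J)"
proof (induction J rule: finite_induct)
  case empty
  have "gauss_ball lam {} = (\<lambda>t. if 0 < t then 1 else 0)"
    by (auto simp: gauss_ball_def gauss_ball_nn_empty)
  then show ?case using log_concave_indicator_pos by simp
next
  case (insert i J)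
  define F where "F t y = gauss_density (lam i) y * gauss_ball lam J (t - y\<^sup>2)" for t y
  have [measurable]: "F t \<in> borel_measurable borel" for t
    unfolding F_def[abs_def] using insert(1) by measurable
  have F_nonneg: "0 \<le> F t y" for t y
    unfolding F_def using lam by (intro mult_nonneg_nonneg gauss_density_nonneg gauss_ball_nonneg)
  have F_le: "F t y \<le> gauss_density (lam i) y" for t y
    unfolding F_def using insert(1) lam
    by (intro mult_right_le_one_le gauss_density_nonneg gauss_ball_nonneg gauss_ball_le_1)
  have "F t y \<le> lam i powr (-1/2)" for t y
    using F_le gauss_density_le[OF lam] order.trans by blast
  then have "bdd_above (range (F t))" for t by (intro bdd_aboveI2)
  moreover have "(\<integral>\<^sup>+y. ennreal (F t y) \<partial>lborel) < \<infinity>" for t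
  proof -
    have "(\<integral>\<^sup>+y. ennreal (F t y) \<partial>lborel) \<le> (\<integral>\<^sup>+y. ennreal (gauss_density (lam i) y) \<partial>lborel)"
      using F_le by (intro nn_integral_mono ennreal_leI)
    also have "\<dots> = 1" using lam by (rule nn_integral_gauss_density)
    finally show ?thesis by (simp add: le_less_trans)
  qed
  moreover have "F t1 y1 powr \<theta> * F t2 y2 powr (1 - \<theta>)
      \<le> F (\<theta> * t1 + (1 - \<theta>) * t2) (\<theta> * y1 + (1 - \<theta>) * y2)"
    if "0 < \<theta>" "\<theta> < 1" for t1 t2 y1 y2 \<theta> :: real
    unfolding F_def using insert.IH insert(1) lam that
    by (intro log_concave_mult_shift_square log_concave_gauss_density mono_gauss_ball
        gauss_density_nonneg gauss_ball_nonneg)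
  ultimately have "log_concave (\<lambda>t. enn2real (\<integral>\<^sup>+y. ennreal (F t y) \<partial>lborel))"
    by (intro log_concave_marginal F_nonneg) auto
  moreover have "gauss_ball lam (insert i J) = (\<lambda>t. enn2real (\<integral>\<^sup>+y. ennreal (F t y) \<partial>lborel))"
    using insert lam gauss_density_nonneg
    by (auto simp: gauss_ball_def[of _ "insert i J"] gauss_ball_nn_insert gauss_ball_nn_eq F_def ennreal_mult')
  ultimately show ?case by simp
qed

end

section \<open>A correlation inequality for squares\<close>

lemma nn_integral_lborel_swap:
  fixes f :: "real \<Rightarrow> real \<Rightarrow> ennreal"
  assumes "case_prod f \<in> borel_measurable (lborel \<Otimes>\<^sub>M lborel)"
  shows "(\<integral>\<^sup>+x. \<integral>\<^sup>+y. f x y \<partial>lborel \<partial>lborel) = (\<integral>\<^sup>+y. \<integral>\<^sup>+x. f x y \<partial>lborel \<partial>lborel)"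
  using pair_sigma_finite.Fubini'[OF _ assms] by (simp add: pair_sigma_finite.intro sigma_finite_lborel)

lemma nn_integral_lborel2_add:
  fixes f g :: "real \<Rightarrow> real \<Rightarrow> ennreal"
  assumes [measurable]: "case_prod f \<in> borel_measurable (lborel \<Otimes>\<^sub>M lborel)"
    "case_prod g \<in> borel_measurable (lborel \<Otimes>\<^sub>M lborel)"
  shows "(\<integral>\<^sup>+x. \<integral>\<^sup>+y. f x y + g x y \<partial>lborel \<partial>lborel)
    = (\<integral>\<^sup>+x. \<integral>\<^sup>+y. f x y \<partial>lborel \<partial>lborel) + (\<integral>\<^sup>+x. \<integral>\<^sup>+y. g x y \<partial>lborel \<partial>lborel)"
proof -
  have "(\<integral>\<^sup>+x. \<integral>\<^sup>+y. f x y + g x y \<partial>lborel \<partial>lborel)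
      = (\<integral>\<^sup>+x. (\<integral>\<^sup>+y. f x y \<partial>lborel) + (\<integral>\<^sup>+y. g x y \<partial>lborel) \<partial>lborel)"
    by (intro nn_integral_cong nn_integral_add) auto
  also have "\<dots> = (\<integral>\<^sup>+x. \<integral>\<^sup>+y. f x y \<partial>lborel \<partial>lborel) + (\<integral>\<^sup>+x. \<integral>\<^sup>+y. g x y \<partial>lborel \<partial>lborel)"
    by (intro nn_integral_add)
      (auto intro!: sigma_finite_measure.borel_measurable_nn_integral sigma_finite_lborel)
  finally show ?thesis .
qed

lemma nn_integral_lborel2_cmult:
  fixes f :: "real \<Rightarrow> real \<Rightarrow> ennreal"
  assumes [measurable]: "case_prod f \<in> borel_measurable (lborel \<Otimes>\<^sub>M lborel)"
  shows "(\<integral>\<^sup>+x. \<integral>\<^sup>+y. c * f x y \<partial>lborel \<partial>lborel) = c * (\<integral>\<^sup>+x. \<integral>\<^sup>+y. f x y \<partial>lborel \<partial>lborel)"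
proof -
  have "(\<integral>\<^sup>+x. \<integral>\<^sup>+y. c * f x y \<partial>lborel \<partial>lborel) = (\<integral>\<^sup>+x. c * (\<integral>\<^sup>+y. f x y \<partial>lborel) \<partial>lborel)"
    by (intro nn_integral_cong nn_integral_cmult) auto
  also have "\<dots> = c * (\<integral>\<^sup>+x. \<integral>\<^sup>+y. f x y \<partial>lborel \<partial>lborel)"
    by (intro nn_integral_cmult)
      (auto intro!: sigma_finite_measure.borel_measurable_nn_integral sigma_finite_lborel)
  finally show ?thesis .
qed

lemma nn_integral_lborel2_mult:
  fixes f g :: "real \<Rightarrow> real \<Rightarrow> ennreal"
  assumes [measurable]: "case_prod f \<in> borel_measurable (lborel \<Otimes>\<^sub>M lborel)"
    "case_prod g \<in> borel_measurable (lborel \<Otimes>\<^sub>M lborel)"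
  shows "(\<integral>\<^sup>+a. \<integral>\<^sup>+b. f a b \<partial>lborel \<partial>lborel) * (\<integral>\<^sup>+a'. \<integral>\<^sup>+b'. g a' b' \<partial>lborel \<partial>lborel)
     = (\<integral>\<^sup>+a. \<integral>\<^sup>+a'. \<integral>\<^sup>+b. \<integral>\<^sup>+b'. f a b * g a' b' \<partial>lborel \<partial>lborel \<partial>lborel \<partial>lborel)"
proof -
  have [measurable]: "(\<lambda>a. \<integral>\<^sup>+b. f a b \<partial>lborel) \<in> borel_measurable lborel"
    "(\<lambda>a. \<integral>\<^sup>+b. g a b \<partial>lborel) \<in> borel_measurable lborel"
    by (intro sigma_finite_measure.borel_measurable_nn_integral sigma_finite_lborel; measurable)+
  have "(\<integral>\<^sup>+a. \<integral>\<^sup>+b. f a b \<partial>lborel \<partial>lborel) * (\<integral>\<^sup>+a'. \<integral>\<^sup>+b'. g a' b' \<partial>lborel \<partial>lborel)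
      = (\<integral>\<^sup>+a. \<integral>\<^sup>+a'. (\<integral>\<^sup>+b. f a b \<partial>lborel) * (\<integral>\<^sup>+b'. g a' b' \<partial>lborel) \<partial>lborel \<partial>lborel)"
    by (simp add: nn_integral_multc nn_integral_cmult)
  also have "\<dots> = (\<integral>\<^sup>+a. \<integral>\<^sup>+a'. \<integral>\<^sup>+b. \<integral>\<^sup>+b'. f a b * g a' b' \<partial>lborel \<partial>lborel \<partial>lborel \<partial>lborel)"
    by (simp add: nn_integral_multc nn_integral_cmult)
  finally show ?thesis .
qed

text \<open>Averaging an integrand with its reflection \<open>(x, y) \<mapsto> (y, x)\<close> does not change the integral.\<close>
lemma nn_integral_lborel2_symmetrize_le:
  fixes F G :: "real \<Rightarrow> real \<Rightarrow> ennreal"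
  assumes [measurable]: "case_prod F \<in> borel_measurable (lborel \<Otimes>\<^sub>M lborel)"
    "case_prod G \<in> borel_measurable (lborel \<Otimes>\<^sub>M lborel)"
    and le: "\<And>x y. F x y + F y x \<le> G x y + G y x"
  shows "(\<integral>\<^sup>+x. \<integral>\<^sup>+y. F x y \<partial>lborel \<partial>lborel) \<le> (\<integral>\<^sup>+x. \<integral>\<^sup>+y. G x y \<partial>lborel \<partial>lborel)"
proof -
  have symF: "(\<integral>\<^sup>+x. \<integral>\<^sup>+y. F y x \<partial>lborel \<partial>lborel) = (\<integral>\<^sup>+x. \<integral>\<^sup>+y. F x y \<partial>lborel \<partial>lborel)"
    and symG: "(\<integral>\<^sup>+x. \<integral>\<^sup>+y. G y x \<partial>lborel \<partial>lborel) = (\<integral>\<^sup>+x. \<integral>\<^sup>+y. G x y \<partial>lborel \<partial>lborel)"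
    by (rule nn_integral_lborel_swap, measurable)+
  have "2 * (\<integral>\<^sup>+x. \<integral>\<^sup>+y. F x y \<partial>lborel \<partial>lborel)
      = (\<integral>\<^sup>+x. \<integral>\<^sup>+y. F x y \<partial>lborel \<partial>lborel) + (\<integral>\<^sup>+x. \<integral>\<^sup>+y. F y x \<partial>lborel \<partial>lborel)"
    unfolding symF by (rule mult_2)
  also have "\<dots> = (\<integral>\<^sup>+x. \<integral>\<^sup>+y. F x y + F y x \<partial>lborel \<partial>lborel)"
    by (rule nn_integral_lborel2_add[symmetric]) measurable
  also have "\<dots> \<le> (\<integral>\<^sup>+x. \<integral>\<^sup>+y. G x y + G y x \<partial>lborel \<partial>lborel)"
    by (intro nn_integral_mono le)
  also have "\<dots> = (\<integral>\<^sup>+x. \<integral>\<^sup>+y. G x y \<partial>lborel \<partial>lborel) + (\<integral>\<^sup>+x. \<integral>\<^sup>+y. G y x \<partial>lborel \<partial>lborel)"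
    by (rule nn_integral_lborel2_add) measurable
  also have "\<dots> = 2 * (\<integral>\<^sup>+x. \<integral>\<^sup>+y. G x y \<partial>lborel \<partial>lborel)"
    unfolding symG by (rule mult_2[symmetric])
  finally show ?thesis by (subst (asm) ennreal_mult_le_mult_iff) auto
qed

lemma ennreal_rearrangement:
  fixes U V :: ennreal
  assumes "0 \<le> x" "x \<le> y" "U \<le> V"
  shows "ennreal x * V + ennreal y * U \<le> ennreal x * U + ennreal y * V"
proof -
  have y: "ennreal y = ennreal x + ennreal (y - x)"
    using assms by (simp add: ennreal_plus[symmetric])
  have "ennreal x * V + ennreal y * U = ennreal x * U + ennreal x * V + ennreal (y - x) * U"
    unfolding y by (simp add: distrib_right add_ac)
  also have "\<dots> \<le> ennreal x * U + ennreal x * V + ennreal (y - x) * V"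
    using assms(3) by (intro add_left_mono mult_left_mono) auto
  also have "\<dots> = ennreal x * U + ennreal y * V"
    unfolding y by (simp add: distrib_right add_ac)
  finally show ?thesis .
qed

locale sq_correlation =
  fixes g1 g2 H :: "real \<Rightarrow> real" and \<rho> :: real
  assumes g1_measurable[measurable]: "g1 \<in> borel_measurable borel"
    and g2_measurable[measurable]: "g2 \<in> borel_measurable borel"
    and H_measurable[measurable]: "H \<in> borel_measurable borel"
    and g1_nonneg: "\<And>x. 0 \<le> g1 x" and g2_nonneg: "\<And>x. 0 \<le> g2 x" and H_nonneg: "\<And>x. 0 \<le> H x"
    and log_concave_H: "log_concave H"
begin

definition dens :: "real \<Rightarrow> real \<Rightarrow> real" where
  "dens a b = g1 a * g2 b * H (\<rho> - a\<^sup>2 - b\<^sup>2)"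

lemma dens_nonneg: "0 \<le> dens a b"
  unfolding dens_def by (simp add: g1_nonneg g2_nonneg H_nonneg)

lemma dens_measurable[measurable]: "(\<lambda>(a, b). dens a b) \<in> borel_measurable (lborel \<Otimes>\<^sub>M lborel)"
  unfolding dens_def by measurable

lemma dens_exchange:
  assumes "a'\<^sup>2 \<le> a\<^sup>2" "b'\<^sup>2 \<le> b\<^sup>2"
  shows "dens a b * dens a' b' \<le> dens a b' * dens a' b"
proof -
  have "H (\<rho> - a\<^sup>2 - b\<^sup>2) * H (\<rho> - a'\<^sup>2 - b'\<^sup>2) \<le> H (\<rho> - a\<^sup>2 - b'\<^sup>2) * H (\<rho> - a'\<^sup>2 - b\<^sup>2)"
    using assms by (intro log_concave_mult_le[OF log_concave_H H_nonneg]) auto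
  then have "(g1 a * g2 b * g1 a' * g2 b') * (H (\<rho> - a\<^sup>2 - b\<^sup>2) * H (\<rho> - a'\<^sup>2 - b'\<^sup>2))
      \<le> (g1 a * g2 b * g1 a' * g2 b') * (H (\<rho> - a\<^sup>2 - b'\<^sup>2) * H (\<rho> - a'\<^sup>2 - b\<^sup>2))"
    by (intro mult_left_mono) (auto simp: g1_nonneg g2_nonneg)
  then show ?thesis unfolding dens_def by (simp add: ac_simps)
qed

definition inner_sq_fst :: "real \<Rightarrow> real \<Rightarrow> ennreal" where
  "inner_sq_fst a a' = (\<integral>\<^sup>+b. \<integral>\<^sup>+b'. ennreal (b\<^sup>2) * ennreal (dens a b * dens a' b') \<partial>lborel \<partial>lborel)"

definition inner_sq_snd :: "real \<Rightarrow> real \<Rightarrow> ennreal" where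
  "inner_sq_snd a a' = (\<integral>\<^sup>+b. \<integral>\<^sup>+b'. ennreal (b'\<^sup>2) * ennreal (dens a b * dens a' b') \<partial>lborel \<partial>lborel)"

lemma inner_sq_measurable[measurable]:
  "(\<lambda>(a, a'). inner_sq_fst a a') \<in> borel_measurable (lborel \<Otimes>\<^sub>M lborel)"
  "(\<lambda>(a, a'). inner_sq_snd a a') \<in> borel_measurable (lborel \<Otimes>\<^sub>M lborel)"
  unfolding inner_sq_fst_def inner_sq_snd_def by measurable

lemma inner_sq_fst_swap: "inner_sq_fst a' a = inner_sq_snd a a'"
  unfolding inner_sq_fst_def inner_sq_snd_def
  by (subst nn_integral_lborel_swap) (measurable, simp add: ac_simps)

lemma inner_sq_fst_le_snd:
  assumes a: "a'\<^sup>2 \<le> a\<^sup>2"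
  shows "inner_sq_fst a a' \<le> inner_sq_snd a a'"
  unfolding inner_sq_fst_def inner_sq_snd_def
proof (rule nn_integral_lborel2_symmetrize_le)
  fix b b' :: real
  let ?X = "ennreal (dens a b * dens a' b')" and ?Y = "ennreal (dens a b' * dens a' b)"
  show "ennreal (b\<^sup>2) * ?X + ennreal (b'\<^sup>2) * ?Y \<le> ennreal (b'\<^sup>2) * ?X + ennreal (b\<^sup>2) * ?Y"
  proof (cases "b'\<^sup>2 \<le> b\<^sup>2")
    case True
    then have "?X \<le> ?Y" using dens_exchange[OF a] by (intro ennreal_leI) auto
    then show ?thesis using ennreal_rearrangement[OF _ True] by (simp add: add.commute)
  next
    case False
    then have "?Y \<le> ?X" using dens_exchange[OF a, where b=b' and b'=b] False by (intro ennreal_leI) auto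
    with ennreal_rearrangement[of "b\<^sup>2" "b'\<^sup>2" ?Y ?X] False
    show ?thesis by (simp add: add.commute)
  qed
qed measurable

lemma moments_as_inner_sq_fst:
  "(\<integral>\<^sup>+a. \<integral>\<^sup>+b. ennreal (a\<^sup>2 * b\<^sup>2 * dens a b) \<partial>lborel \<partial>lborel)
      * (\<integral>\<^sup>+a. \<integral>\<^sup>+b. ennreal (dens a b) \<partial>lborel \<partial>lborel)
    = (\<integral>\<^sup>+a. \<integral>\<^sup>+a'. ennreal (a\<^sup>2) * inner_sq_fst a a' \<partial>lborel \<partial>lborel)" (is "?L1 * ?L2 = _")
proof -
  have "?L1 * ?L2 = (\<integral>\<^sup>+a. \<integral>\<^sup>+a'. \<integral>\<^sup>+b. \<integral>\<^sup>+b'. ennreal (a\<^sup>2 * b\<^sup>2 * dens a b) * ennreal (dens a' b')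
      \<partial>lborel \<partial>lborel \<partial>lborel \<partial>lborel)"
    by (rule nn_integral_lborel2_mult) measurable
  also have "\<dots> = (\<integral>\<^sup>+a. \<integral>\<^sup>+a'. \<integral>\<^sup>+b. \<integral>\<^sup>+b'. ennreal (a\<^sup>2) * (ennreal (b\<^sup>2) * ennreal (dens a b * dens a' b'))
      \<partial>lborel \<partial>lborel \<partial>lborel \<partial>lborel)"
    by (intro nn_integral_cong) (simp add: ennreal_mult[symmetric] dens_nonneg mult.assoc)
  also have "\<dots> = (\<integral>\<^sup>+a. \<integral>\<^sup>+a'. ennreal (a\<^sup>2) * inner_sq_fst a a' \<partial>lborel \<partial>lborel)"
    unfolding inner_sq_fst_def by (intro nn_integral_cong nn_integral_lborel2_cmult) measurable
  finally show ?thesis .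
qed

lemma moments_as_inner_sq_snd:
  "(\<integral>\<^sup>+a. \<integral>\<^sup>+b. ennreal (a\<^sup>2 * dens a b) \<partial>lborel \<partial>lborel)
      * (\<integral>\<^sup>+a. \<integral>\<^sup>+b. ennreal (b\<^sup>2 * dens a b) \<partial>lborel \<partial>lborel)
    = (\<integral>\<^sup>+a. \<integral>\<^sup>+a'. ennreal (a\<^sup>2) * inner_sq_snd a a' \<partial>lborel \<partial>lborel)" (is "?R1 * ?R2 = _")
proof -
  have "?R1 * ?R2 = (\<integral>\<^sup>+a. \<integral>\<^sup>+a'. \<integral>\<^sup>+b. \<integral>\<^sup>+b'. ennreal (a\<^sup>2 * dens a b) * ennreal (b'\<^sup>2 * dens a' b')
      \<partial>lborel \<partial>lborel \<partial>lborel \<partial>lborel)"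
    by (rule nn_integral_lborel2_mult) measurable
  also have "\<dots> = (\<integral>\<^sup>+a. \<integral>\<^sup>+a'. \<integral>\<^sup>+b. \<integral>\<^sup>+b'. ennreal (a\<^sup>2) * (ennreal (b'\<^sup>2) * ennreal (dens a b * dens a' b'))
      \<partial>lborel \<partial>lborel \<partial>lborel \<partial>lborel)"
    by (intro nn_integral_cong) (simp add: ennreal_mult[symmetric] dens_nonneg ac_simps)
  also have "\<dots> = (\<integral>\<^sup>+a. \<integral>\<^sup>+a'. ennreal (a\<^sup>2) * inner_sq_snd a a' \<partial>lborel \<partial>lborel)"
    unfolding inner_sq_snd_def by (intro nn_integral_cong nn_integral_lborel2_cmult) measurable
  finally show ?thesis .
qed

theorem sq_moments_correlation:
  "(\<integral>\<^sup>+a. \<integral>\<^sup>+b. ennreal (a\<^sup>2 * b\<^sup>2 * dens a b) \<partial>lborel \<partial>lborel)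
      * (\<integral>\<^sup>+a. \<integral>\<^sup>+b. ennreal (dens a b) \<partial>lborel \<partial>lborel)
   \<le> (\<integral>\<^sup>+a. \<integral>\<^sup>+b. ennreal (a\<^sup>2 * dens a b) \<partial>lborel \<partial>lborel)
      * (\<integral>\<^sup>+a. \<integral>\<^sup>+b. ennreal (b\<^sup>2 * dens a b) \<partial>lborel \<partial>lborel)"
  unfolding moments_as_inner_sq_fst moments_as_inner_sq_snd
proof (rule nn_integral_lborel2_symmetrize_le)
  fix a a' :: real
  have swap: "inner_sq_fst a' a = inner_sq_snd a a'" "inner_sq_snd a' a = inner_sq_fst a a'"
    using inner_sq_fst_swap[of a a'] inner_sq_fst_swap[of a' a] by simp_all
  show "ennreal (a\<^sup>2) * inner_sq_fst a a' + ennreal (a'\<^sup>2) * inner_sq_fst a' a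
      \<le> ennreal (a\<^sup>2) * inner_sq_snd a a' + ennreal (a'\<^sup>2) * inner_sq_snd a' a"
    unfolding swap
  proof (cases "a'\<^sup>2 \<le> a\<^sup>2")
    case True
    with ennreal_rearrangement[OF _ True inner_sq_fst_le_snd[OF True]]
    show "ennreal (a\<^sup>2) * inner_sq_fst a a' + ennreal (a'\<^sup>2) * inner_sq_snd a a'
      \<le> ennreal (a\<^sup>2) * inner_sq_snd a a' + ennreal (a'\<^sup>2) * inner_sq_fst a a'"
      by (simp add: add.commute)
  next
    case False
    then have "inner_sq_snd a a' \<le> inner_sq_fst a a'"
      using inner_sq_fst_le_snd[of a a'] by (simp add: swap)
    with ennreal_rearrangement[of "a\<^sup>2" "a'\<^sup>2"] False
    show "ennreal (a\<^sup>2) * inner_sq_fst a a' + ennreal (a'\<^sup>2) * inner_sq_snd a a'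
      \<le> ennreal (a\<^sup>2) * inner_sq_snd a a' + ennreal (a'\<^sup>2) * inner_sq_fst a a'"
      by simp
  qed
qed measurable

end

section \<open>The truncated normal distribution\<close>

lemma measurable_vec_lambda_PiM[measurable]:
  "(\<lambda>\<omega>. (\<chi> i. \<omega> i) :: real^'n) \<in> borel_measurable (Pi\<^sub>M UNIV (\<lambda>_::'n. lborel))"
proof (subst borel_measurable_euclidean_space, intro ballI)
  fix b :: "real^'n"
  assume "b \<in> Basis"
  then obtain j where b: "b = axis j 1" by (auto simp: Basis_vec_def)
  have "(\<lambda>\<omega>. (\<chi> i. \<omega> i) \<bullet> b) = (\<lambda>\<omega>::'n\<Rightarrow>real. \<omega> j)"
    unfolding b by (simp add: inner_axis)
  then show "(\<lambda>\<omega>. (\<chi> i. \<omega> i) \<bullet> b) \<in> borel_measurable (Pi\<^sub>M UNIV (\<lambda>_::'n. lborel))" by simp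
qed

lemma lborel_vec_eq_distr_PiM:
  "(lborel :: (real^'n) measure) = distr (Pi\<^sub>M UNIV (\<lambda>_::'n. lborel)) borel (\<lambda>\<omega>. \<chi> i. \<omega> i)"
proof (rule lborel_eqI)
  fix l u :: "real^'n"
  assume lu: "\<And>b. b \<in> Basis \<Longrightarrow> l \<bullet> b \<le> u \<bullet> b"
  have lu': "l $ i \<le> u $ i" for i
    using lu[of "axis i 1"] by (simp add: Basis_vec_def cart_eq_inner_axis inner_commute) blast
  have pre: "(\<lambda>\<omega>. \<chi> i. \<omega> i) -` box l u \<inter> space (Pi\<^sub>M UNIV (\<lambda>_::'n. lborel)) = (\<Pi>\<^sub>E i\<in>UNIV. {l $ i <..< u $ i})"
    by (auto simp: mem_box_cart space_PiM PiE_iff)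
  have "emeasure (distr (Pi\<^sub>M UNIV (\<lambda>_::'n. lborel)) borel (\<lambda>\<omega>. \<chi> i. \<omega> i)) (box l u)
      = emeasure (Pi\<^sub>M UNIV (\<lambda>_::'n. lborel)) (\<Pi>\<^sub>E i\<in>UNIV. {l $ i <..< u $ i})"
    by (subst emeasure_distr) (auto simp: pre)
  also have "\<dots> = (\<Prod>i\<in>UNIV. emeasure lborel {l $ i <..< u $ i})"
    by (rule lborel_product.emeasure_PiM) auto
  also have "\<dots> = ennreal (\<Prod>i\<in>UNIV. u $ i - l $ i)" using lu' by (simp add: prod_ennreal)
  also have "(\<Prod>i\<in>UNIV. u $ i - l $ i) = Henstock_Kurzweil_Integration.content (cbox l u)"
  proof -
    have "l \<in> cbox l u" using lu' by (simp add: mem_box_cart)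
    then show ?thesis by (subst content_cbox_cart) auto
  qed
  also have "ennreal (Henstock_Kurzweil_Integration.content (cbox l u)) = emeasure lborel (cbox l u)"
    using emeasure_lborel_cbox_finite[of l u] by (simp add: emeasure_eq_ennreal_measure)
  also have "\<dots> = ennreal (\<Prod>b\<in>Basis. (u - l) \<bullet> b)"
    using lu by (simp add: emeasure_lborel_cbox_eq)
  finally show "emeasure (distr (Pi\<^sub>M UNIV (\<lambda>_::'n. lborel)) borel (\<lambda>\<omega>. \<chi> i. \<omega> i)) (box l u)
      = ennreal (\<Prod>b\<in>Basis. (u - l) \<bullet> b)" .
qed simp

lemma nn_integral_lborel_vec:
  fixes f :: "real^'n \<Rightarrow> ennreal"
  assumes [measurable]: "f \<in> borel_measurable borel"
  shows "(\<integral>\<^sup>+x. f x \<partial>lborel) = (\<integral>\<^sup>+\<omega>. f (\<chi> i. \<omega> i) \<partial>Pi\<^sub>M UNIV (\<lambda>_::'n. lborel))"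
  by (subst lborel_vec_eq_distr_PiM) (simp add: nn_integral_distr)

lemma nn_integral_PiM_insert2:
  fixes f :: "('i \<Rightarrow> real) \<Rightarrow> ennreal"
  assumes R: "finite R" "n \<notin> insert m R" "m \<notin> R"
    and f[measurable]: "f \<in> borel_measurable (Pi\<^sub>M (insert n (insert m R)) (\<lambda>_. lborel))"
  shows "(\<integral>\<^sup>+w. f w \<partial>Pi\<^sub>M (insert n (insert m R)) (\<lambda>_. lborel))
    = (\<integral>\<^sup>+a. \<integral>\<^sup>+b. \<integral>\<^sup>+w. f (w(m := b, n := a)) \<partial>Pi\<^sub>M R (\<lambda>_. lborel) \<partial>lborel \<partial>lborel)"
proof -
  have "(\<integral>\<^sup>+w. f w \<partial>Pi\<^sub>M (insert n (insert m R)) (\<lambda>_. lborel))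
      = (\<integral>\<^sup>+a. \<integral>\<^sup>+w. f (w(n := a)) \<partial>Pi\<^sub>M (insert m R) (\<lambda>_. lborel) \<partial>lborel)"
    using R by (intro lborel_product.product_nn_integral_insert_rev f) auto
  also have "\<dots> = (\<integral>\<^sup>+a. \<integral>\<^sup>+b. \<integral>\<^sup>+w. f (w(m := b, n := a)) \<partial>Pi\<^sub>M R (\<lambda>_. lborel) \<partial>lborel \<partial>lborel)"
  proof (intro nn_integral_cong)
    fix a :: real
    have "(\<lambda>w. w(n := a)) \<in> measurable (Pi\<^sub>M (insert m R) (\<lambda>_. lborel)) (Pi\<^sub>M (insert n (insert m R)) (\<lambda>_. lborel))"
      by (rule measurable_fun_upd[where J="insert m R"]) auto
    from measurable_compose[OF this f]
    show "(\<integral>\<^sup>+w. f (w(n := a)) \<partial>Pi\<^sub>M (insert m R) (\<lambda>_. lborel))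
        = (\<integral>\<^sup>+b. \<integral>\<^sup>+w. f (w(m := b, n := a)) \<partial>Pi\<^sub>M R (\<lambda>_. lborel) \<partial>lborel)"
      using R by (subst lborel_product.product_nn_integral_insert_rev) auto
  qed
  finally show ?thesis .
qed

lemma trunc_normal_unnorm_eq:
  "trunc_normal_unnorm lam rho x = (if x \<bullet> x < rho then (\<Prod>i\<in>UNIV. gauss_density (lam i) (x $ i)) else 0)"
  unfolding trunc_normal_unnorm_def gauss_density_def by simp

lemma trunc_normal_unnorm_measurable[measurable]: "trunc_normal_unnorm lam rho \<in> borel_measurable borel"
  unfolding trunc_normal_unnorm_eq[abs_def] by measurable

lemma trunc_normal_unnorm_nonneg: "(\<And>i. 0 < lam i) \<Longrightarrow> 0 \<le> trunc_normal_unnorm lam rho x"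
  unfolding trunc_normal_unnorm_eq by (auto intro!: prod_nonneg gauss_density_nonneg)

text \<open>Unnormalized density of the pair of coordinates \<open>(x\<^sub>n, x\<^sub>m)\<close>.\<close>
definition trunc_normal_pair :: "('n::finite \<Rightarrow> real) \<Rightarrow> real \<Rightarrow> 'n \<Rightarrow> 'n \<Rightarrow> real \<Rightarrow> real \<Rightarrow> real" where
  "trunc_normal_pair lam rho n m =
     sq_correlation.dens (gauss_density (lam n)) (gauss_density (lam m)) (gauss_ball lam (UNIV - {n, m})) rho"

lemma sq_correlation_trunc_normal:
  fixes lam :: "'n::finite \<Rightarrow> real"
  assumes "\<And>j. 0 < lam j"
  shows "sq_correlation (gauss_density (lam n)) (gauss_density (lam m)) (gauss_ball lam (UNIV - {n, m}))"
  by unfold_locales (auto simp: assms gauss_density_nonneg gauss_ball_nonneg log_concave_gauss_ball)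

lemma trunc_normal_pair_eq:
  fixes lam :: "'n::finite \<Rightarrow> real"
  assumes "\<And>j. 0 < lam j"
  shows "trunc_normal_pair lam rho n m a b
    = gauss_density (lam n) a * gauss_density (lam m) b * gauss_ball lam (UNIV - {n, m}) (rho - a\<^sup>2 - b\<^sup>2)"
  unfolding trunc_normal_pair_def by (rule sq_correlation.dens_def[OF sq_correlation_trunc_normal[OF assms]])

lemma nn_integral_trunc_normal_unnorm_pair:
  fixes lam :: "'n::finite \<Rightarrow> real" and \<phi> :: "real \<Rightarrow> real \<Rightarrow> real"
  assumes lam: "\<And>j. 0 < lam j" and nm: "n \<noteq> m"
    and \<phi>[measurable]: "case_prod \<phi> \<in> borel_measurable (lborel \<Otimes>\<^sub>M lborel)" and \<phi>_nonneg: "\<And>a b. 0 \<le> \<phi> a b"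
  shows "(\<integral>\<^sup>+x. ennreal (trunc_normal_unnorm lam rho x * \<phi> (x $ n) (x $ m)) \<partial>lborel)
    = (\<integral>\<^sup>+a. \<integral>\<^sup>+b. ennreal (\<phi> a b * trunc_normal_pair lam rho n m a b) \<partial>lborel \<partial>lborel)"
proof -
  define R where "R = UNIV - {n, m}"
  have U: "(UNIV :: 'n set) = insert n (insert m R)" unfolding R_def by auto
  have R: "finite R" "n \<notin> insert m R" "m \<notin> R" using nm unfolding R_def by auto
  define g where "g w = ennreal ((if (\<Sum>i\<in>UNIV. (w i)\<^sup>2) < rho then (\<Prod>i\<in>UNIV. gauss_density (lam i) (w i)) else 0)
    * \<phi> (w n) (w m))" for w :: "'n \<Rightarrow> real"
  have [measurable]: "g \<in> borel_measurable (Pi\<^sub>M (insert n (insert m R)) (\<lambda>_. lborel))"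
    unfolding g_def U[symmetric] by measurable
  have g_upd: "g (w(m := b, n := a)) = ennreal (\<phi> a b * gauss_density (lam n) a * gauss_density (lam m) b)
      * ennreal (if (\<Sum>j\<in>R. (w j)\<^sup>2) < rho - a\<^sup>2 - b\<^sup>2 then (\<Prod>j\<in>R. gauss_density (lam j) (w j)) else 0)" for a b w
  proof -
    have "(\<Sum>j\<in>R. ((w(m := b, n := a)) j)\<^sup>2) = (\<Sum>j\<in>R. (w j)\<^sup>2)"
      "(\<Prod>j\<in>R. gauss_density (lam j) ((w(m := b, n := a)) j)) = (\<Prod>j\<in>R. gauss_density (lam j) (w j))"
      using R by (auto intro!: sum.cong prod.cong)
    moreover have "0 \<le> (\<Prod>j\<in>R. gauss_density (lam j) (w j))"
      using lam by (intro prod_nonneg gauss_density_nonneg) auto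
    ultimately show ?thesis
      unfolding g_def U using R nm lam \<phi>_nonneg
      by (auto simp: ennreal_mult[symmetric] gauss_density_nonneg algebra_simps)
  qed
  have "(\<integral>\<^sup>+x. ennreal (trunc_normal_unnorm lam rho x * \<phi> (x $ n) (x $ m)) \<partial>lborel)
      = (\<integral>\<^sup>+w. g w \<partial>Pi\<^sub>M (insert n (insert m R)) (\<lambda>_. lborel))"
    unfolding U[symmetric]
    by (subst nn_integral_lborel_vec)
      (auto simp: g_def trunc_normal_unnorm_eq inner_vec_def power2_eq_square intro!: nn_integral_cong)
  also have "\<dots> = (\<integral>\<^sup>+a. \<integral>\<^sup>+b. \<integral>\<^sup>+w. g (w(m := b, n := a)) \<partial>Pi\<^sub>M R (\<lambda>_. lborel) \<partial>lborel \<partial>lborel)"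
    using R by (intro nn_integral_PiM_insert2) measurable
  also have "\<dots> = (\<integral>\<^sup>+a. \<integral>\<^sup>+b. ennreal (\<phi> a b * gauss_density (lam n) a * gauss_density (lam m) b)
      * gauss_ball_nn lam R (rho - a\<^sup>2 - b\<^sup>2) \<partial>lborel \<partial>lborel)"
    unfolding g_upd gauss_ball_nn_def using R by (intro nn_integral_cong nn_integral_cmult) measurable
  also have "\<dots> = (\<integral>\<^sup>+a. \<integral>\<^sup>+b. ennreal (\<phi> a b * trunc_normal_pair lam rho n m a b) \<partial>lborel \<partial>lborel)"
    using lam R \<phi>_nonneg
    by (simp add: gauss_ball_nn_eq trunc_normal_pair_eq R_def ennreal_mult[symmetric]
        gauss_density_nonneg gauss_ball_nonneg ac_simps)
  finally show ?thesis .
qed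

lemma nn_integral_trunc_normal_pair_le:
  fixes lam :: "'n::finite \<Rightarrow> real" and C rho :: real and \<phi> :: "real \<Rightarrow> real \<Rightarrow> real" and n m :: 'n
  assumes lam: "\<And>j. 0 < lam j" and C: "0 \<le> C"
    and \<phi>_le: "\<And>a b. a\<^sup>2 \<le> rho \<Longrightarrow> b\<^sup>2 \<le> rho \<Longrightarrow> \<phi> a b \<le> C" and \<phi>_nonneg: "\<And>a b. 0 \<le> \<phi> a b"
  shows "(\<integral>\<^sup>+a. \<integral>\<^sup>+b. ennreal (\<phi> a b * trunc_normal_pair lam rho n m a b) \<partial>lborel \<partial>lborel) \<le> ennreal C"
proof -
  let ?g = "\<lambda>a b. gauss_density (lam n) a * gauss_density (lam m) b"
  have g: "0 \<le> ?g a b" for a b using lam by (simp add: gauss_density_nonneg)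
  have "\<phi> a b * trunc_normal_pair lam rho n m a b \<le> C * ?g a b" for a b
  proof (cases "rho - a\<^sup>2 - b\<^sup>2 \<le> 0")
    case True
    then show ?thesis using lam C g by (simp add: trunc_normal_pair_eq gauss_ball_nonpos)
  next
    case False
    then have "a\<^sup>2 \<le> rho" "b\<^sup>2 \<le> rho" using zero_le_power2[of a] zero_le_power2[of b] by linarith+
    then have "\<phi> a b * (?g a b * gauss_ball lam (UNIV - {n, m}) (rho - a\<^sup>2 - b\<^sup>2)) \<le> C * (?g a b * 1)"
      using lam C g \<phi>_le \<phi>_nonneg
      by (intro mult_mono mult_left_mono gauss_ball_le_1) (auto simp: gauss_ball_nonneg)
    then show ?thesis using lam by (simp add: trunc_normal_pair_eq ac_simps)
  qed
  then have "(\<integral>\<^sup>+a. \<integral>\<^sup>+b. ennreal (\<phi> a b * trunc_normal_pair lam rho n m a b) \<partial>lborel \<partial>lborel)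
      \<le> (\<integral>\<^sup>+a. \<integral>\<^sup>+b. ennreal C * ennreal (gauss_density (lam n) a) * ennreal (gauss_density (lam m) b)
          \<partial>lborel \<partial>lborel)"
    using C lam by (intro nn_integral_mono) (simp add: ennreal_mult[symmetric] gauss_density_nonneg ennreal_leI mult.assoc)
  also have "\<dots> = ennreal C"
    using lam by (simp add: nn_integral_cmult nn_integral_gauss_density)
  finally show ?thesis .
qed

lemma trunc_normal_pair_expectation:
  fixes M :: "'a measure" and X :: "'a \<Rightarrow> real ^ 'n" and \<phi> :: "real \<Rightarrow> real \<Rightarrow> real"
  assumes "prob_space M"
    and dist: "distributed M lborel X (\<lambda>x. ennreal (trunc_normal_density lam rho x))"
    and lam: "\<And>j. 0 < lam j" and nm: "n \<noteq> m"
    and \<phi>[measurable]: "case_prod \<phi> \<in> borel_measurable (lborel \<Otimes>\<^sub>M lborel)" and \<phi>_nonneg: "\<And>a b. 0 \<le> \<phi> a b"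
    and C: "0 \<le> C" and \<phi>_le: "\<And>a b. a\<^sup>2 \<le> rho \<Longrightarrow> b\<^sup>2 \<le> rho \<Longrightarrow> \<phi> a b \<le> C"
  shows "integrable M (\<lambda>\<omega>. \<phi> (X \<omega> $ n) (X \<omega> $ m))"
    and "ennreal (\<integral>\<omega>. \<phi> (X \<omega> $ n) (X \<omega> $ m) \<partial>M)
      = ennreal (trunc_normal_const lam rho)
        * (\<integral>\<^sup>+a. \<integral>\<^sup>+b. ennreal (\<phi> a b * trunc_normal_pair lam rho n m a b) \<partial>lborel \<partial>lborel)"
proof -
  define k where "k = trunc_normal_const lam rho"
  define S where "S = (\<integral>\<^sup>+a. \<integral>\<^sup>+b. ennreal (\<phi> a b * trunc_normal_pair lam rho n m a b) \<partial>lborel \<partial>lborel)"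
  have k: "0 \<le> k"
    unfolding k_def trunc_normal_const_def using lam by (simp add: integral_nonneg trunc_normal_unnorm_nonneg)
  have dens: "trunc_normal_density lam rho x = k * trunc_normal_unnorm lam rho x" for x
    by (simp add: trunc_normal_density_def k_def)
  have dens_nonneg: "0 \<le> trunc_normal_density lam rho x" for x
    using k lam by (simp add: dens trunc_normal_unnorm_nonneg)
  have [measurable]: "(\<lambda>x :: real^'n. \<phi> (x $ n) (x $ m)) \<in> borel_measurable borel"
    "trunc_normal_density lam rho \<in> borel_measurable borel"
    unfolding dens[abs_def] by measurable
  have nn: "(\<integral>\<^sup>+x. ennreal (trunc_normal_density lam rho x * \<phi> (x $ n) (x $ m)) \<partial>lborel) = ennreal k * S"
    unfolding S_def nn_integral_trunc_normal_unnorm_pair[OF lam nm \<phi> \<phi>_nonneg, symmetric]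
    using k lam \<phi>_nonneg
    by (subst nn_integral_cmult[symmetric]) (auto simp: dens ennreal_mult trunc_normal_unnorm_nonneg mult.assoc)
  have "S < \<infinity>"
    unfolding S_def using nn_integral_trunc_normal_pair_le[of lam C rho \<phi> n m] lam C \<phi>_le \<phi>_nonneg
    by (simp add: le_less_trans)
  then have int: "integrable lborel (\<lambda>x. trunc_normal_density lam rho x * \<phi> (x $ n) (x $ m))"
    using nn dens_nonneg \<phi>_nonneg
    by (intro integrableI_nonneg) (auto simp: ennreal_mult_less_top)
  then show "integrable M (\<lambda>\<omega>. \<phi> (X \<omega> $ n) (X \<omega> $ m))"
    using distributed_integrable[OF dist, of "\<lambda>x. \<phi> (x $ n) (x $ m)"] dens_nonneg by simp
  have "(\<integral>\<omega>. \<phi> (X \<omega> $ n) (X \<omega> $ m) \<partial>M) = (\<integral>x. trunc_normal_density lam rho x * \<phi> (x $ n) (x $ m) \<partial>lborel)"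
    by (rule distributed_integral[OF dist, symmetric]) (simp_all add: dens_nonneg)
  also have "ennreal \<dots> = ennreal k * S"
    using int dens_nonneg \<phi>_nonneg by (simp add: nn[symmetric] nn_integral_eq_integral)
  finally show "ennreal (\<integral>\<omega>. \<phi> (X \<omega> $ n) (X \<omega> $ m) \<partial>M) = ennreal (trunc_normal_const lam rho) * S"
    by (simp add: k_def)
qed

lemma (in prob_space) cov_eq:
  assumes "integrable M Y" "integrable M Z" "integrable M (\<lambda>\<omega>. Y \<omega> * Z \<omega>)"
  shows "cov M Y Z = expectation (\<lambda>\<omega>. Y \<omega> * Z \<omega>) - expectation Y * expectation Z"
proof -
  let ?a = "expectation Y" and ?b = "expectation Z"
  have "cov M Y Z = expectation (\<lambda>\<omega>. Y \<omega> * Z \<omega> - (?b * Y \<omega> + ?a * Z \<omega>) + ?a * ?b)"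
    unfolding cov_def by (rule Bochner_Integration.integral_cong) (auto simp: algebra_simps)
  also have "\<dots> = expectation (\<lambda>\<omega>. Y \<omega> * Z \<omega>) - (?b * ?a + ?a * ?b) + ?a * ?b"
    using assms by (simp add: prob_space)
  finally show ?thesis by simp
qed

lemma trunc_normal_sq_correlation:
  fixes M :: "'a measure" and X :: "'a \<Rightarrow> real ^ 'n"
  assumes M: "prob_space M" and rho: "0 < rho" and lam: "\<And>j. 0 < lam j"
    and dist: "distributed M lborel X (\<lambda>x. ennreal (trunc_normal_density lam rho x))" and nm: "n \<noteq> m"
  shows "integrable M (\<lambda>\<omega>. (X \<omega> $ n)\<^sup>2)" "integrable M (\<lambda>\<omega>. (X \<omega> $ m)\<^sup>2)"
    "integrable M (\<lambda>\<omega>. (X \<omega> $ n)\<^sup>2 * (X \<omega> $ m)\<^sup>2)"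
    and "(\<integral>\<omega>. (X \<omega> $ n)\<^sup>2 * (X \<omega> $ m)\<^sup>2 \<partial>M) \<le> (\<integral>\<omega>. (X \<omega> $ n)\<^sup>2 \<partial>M) * (\<integral>\<omega>. (X \<omega> $ m)\<^sup>2 \<partial>M)"
proof -
  interpret prob_space M by (rule M)
  note E = trunc_normal_pair_expectation[OF M dist lam nm]
  note E11 = E[of "\<lambda>a b. a\<^sup>2 * b\<^sup>2" "rho * rho"] and E10 = E[of "\<lambda>a b. a\<^sup>2" rho]
    and E01 = E[of "\<lambda>a b. b\<^sup>2" rho] and E00 = E[of "\<lambda>a b. 1" 1]
  show "integrable M (\<lambda>\<omega>. (X \<omega> $ n)\<^sup>2)" "integrable M (\<lambda>\<omega>. (X \<omega> $ m)\<^sup>2)"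
    "integrable M (\<lambda>\<omega>. (X \<omega> $ n)\<^sup>2 * (X \<omega> $ m)\<^sup>2)"
    using E11(1) E10(1) E01(1) rho by (simp_all add: mult_mono)
  let ?k = "ennreal (trunc_normal_const lam rho)"
  let ?S = "\<lambda>\<phi>. \<integral>\<^sup>+a. \<integral>\<^sup>+b. ennreal (\<phi> a b * trunc_normal_pair lam rho n m a b) \<partial>lborel \<partial>lborel"
  have "?S (\<lambda>a b. a\<^sup>2 * b\<^sup>2) * ?S (\<lambda>a b. 1) \<le> ?S (\<lambda>a b. a\<^sup>2) * ?S (\<lambda>a b. b\<^sup>2)"
    using sq_correlation.sq_moments_correlation[OF sq_correlation_trunc_normal[OF lam, where n=n and m=m],
        where \<rho>=rho]
    by (simp add: trunc_normal_pair_def)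
  then have "(?k * ?S (\<lambda>a b. a\<^sup>2 * b\<^sup>2)) * (?k * ?S (\<lambda>a b. 1))
      \<le> (?k * ?S (\<lambda>a b. a\<^sup>2)) * (?k * ?S (\<lambda>a b. b\<^sup>2))"
    by (simp add: ac_simps mult_left_mono)
  then have "ennreal (\<integral>\<omega>. (X \<omega> $ n)\<^sup>2 * (X \<omega> $ m)\<^sup>2 \<partial>M)
      \<le> ennreal ((\<integral>\<omega>. (X \<omega> $ n)\<^sup>2 \<partial>M) * (\<integral>\<omega>. (X \<omega> $ m)\<^sup>2 \<partial>M))"
    using E11(2) E10(2) E01(2) E00(2) rho by (simp add: prob_space ennreal_mult' mult_mono)
  then show "(\<integral>\<omega>. (X \<omega> $ n)\<^sup>2 * (X \<omega> $ m)\<^sup>2 \<partial>M) \<le> (\<integral>\<omega>. (X \<omega> $ n)\<^sup>2 \<partial>M) * (\<integral>\<omega>. (X \<omega> $ m)\<^sup>2 \<partial>M)"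
    by (simp add: ennreal_le_iff integral_nonneg_AE)
qed

theorem mainTheorem3:
  fixes M :: "'a measure" and X :: "'a \<Rightarrow> real ^ 'n"
    and lam :: "'n \<Rightarrow> real" and rho :: real and n m :: 'n
  assumes "prob_space M"
    and "CARD('n) \<ge> 2"
    and "rho > 0"
    and "\<And>i. lam i > 0"
    and "distributed M lborel X (\<lambda>x. ennreal (trunc_normal_density lam rho x))"
    and "n \<noteq> m"
  shows "cov M (\<lambda>\<omega>. (X \<omega> $ n)^2) (\<lambda>\<omega>. (X \<omega> $ m)^2) \<le> 0"
proof -
  interpret prob_space M by (rule assms(1))
  \<comment> \<open>\<open>CARD('n) \<ge> 2\<close> is implied by \<open>n \<noteq> m\<close> and not used.\<close>
  note sq = trunc_normal_sq_correlation[OF assms(1,3,4,5,6)]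
  have "cov M (\<lambda>\<omega>. (X \<omega> $ n)^2) (\<lambda>\<omega>. (X \<omega> $ m)^2)
      = (\<integral>\<omega>. (X \<omega> $ n)\<^sup>2 * (X \<omega> $ m)\<^sup>2 \<partial>M) - (\<integral>\<omega>. (X \<omega> $ n)\<^sup>2 \<partial>M) * (\<integral>\<omega>. (X \<omega> $ m)\<^sup>2 \<partial>M)"
    using sq(1-3) by (rule cov_eq)
  with sq(4) show ?thesis by simp
qed

end
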